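(* Let $G$ be a finite simple connected graph. If $c_{\infty}(G)=1$ then every block of $G$ has domination number one.
   Context: Cops and Robber with an infinitely fast robber: the game is played on a graph $G$. A set of cops first choose initial vertices (several cops may share a vertex); then the robber, knowing their positions, chooses a vertex. Then the players move in alternating rounds, cops first. In the cops' turn each cop either stays or moves to an adjacent vertex; in the robber's turn she either stays or moves along any path of $G$ starting at her current vertex that contains no vertex currently occupied by a cop. The cops win if at some point a cop moves to the vertex occupied by the robber. $c_{\infty}(G)$ is the minimum number of cops for which the cops have a strategy that guarantees a win. A block of $G$ is either a maximal 2-connected subgraph of $G$ or an edge of $G$ not contained in any 2-connected subgraph. A block $B$ has domination number one if some vertex $x\in V(B)$ has every other vertex of $B$ adjacent to $x$. *)

theory Defs
  imports Main
begin

definition simple_graph :: "'a set \<Rightarrow> ('a \<Rightarrow> 'a \<Rightarrow> bool) \<Rightarrow> bool" where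
  "simple_graph V E \<longleftrightarrow> finite V \<and> (\<forall>x y. E x y \<longrightarrow> x \<in> V \<and> y \<in> V)
     \<and> (\<forall>x y. E x y \<longrightarrow> E y x) \<and> (\<forall>x. \<not> E x x)"

definition connected_on :: "('a \<Rightarrow> 'a \<Rightarrow> bool) \<Rightarrow> 'a set \<Rightarrow> bool" where
  "connected_on E S \<longleftrightarrow> S \<noteq> {} \<and>
     (\<forall>x\<in>S. \<forall>y\<in>S. (\<lambda>a b. E a b \<and> a \<in> S \<and> b \<in> S)\<^sup>*\<^sup>* x y)"

definition two_connected_on :: "('a \<Rightarrow> 'a \<Rightarrow> bool) \<Rightarrow> 'a set \<Rightarrow> bool" where
  "two_connected_on E S \<longleftrightarrow> finite S \<and> card S \<ge> 3 \<and> connected_on E S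
     \<and> (\<forall>v\<in>S. connected_on E (S - {v}))"

definition is_block :: "'a set \<Rightarrow> ('a \<Rightarrow> 'a \<Rightarrow> bool) \<Rightarrow> 'a set \<Rightarrow> bool" where
  "is_block V E B \<longleftrightarrow> B \<subseteq> V \<and>
     ((two_connected_on E B \<and> (\<forall>S. B \<subset> S \<and> S \<subseteq> V \<longrightarrow> \<not> two_connected_on E S))
      \<or> (\<exists>u v. B = {u, v} \<and> E u v \<and>
            (\<forall>S. {u, v} \<subseteq> S \<and> S \<subseteq> V \<longrightarrow> \<not> two_connected_on E S)))"

definition block_dom_one :: "('a \<Rightarrow> 'a \<Rightarrow> bool) \<Rightarrow> 'a set \<Rightarrow> bool" where
  "block_dom_one E B \<longleftrightarrow> (\<exists>x\<in>B. \<forall>y\<in>B. y \<noteq> x \<longrightarrow> E x y)"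

text \<open>Game with k cops (positions: a function on indices i < k) and an infinitely fast robber.\<close>
definition cop_step :: "('a \<Rightarrow> 'a \<Rightarrow> bool) \<Rightarrow> nat \<Rightarrow> (nat \<Rightarrow> 'a) \<Rightarrow> (nat \<Rightarrow> 'a) \<Rightarrow> bool" where
  "cop_step E k c c' \<longleftrightarrow> (\<forall>i<k. c' i = c i \<or> E (c i) (c' i))"

definition robber_step :: "('a \<Rightarrow> 'a \<Rightarrow> bool) \<Rightarrow> nat \<Rightarrow> (nat \<Rightarrow> 'a) \<Rightarrow> 'a \<Rightarrow> 'a \<Rightarrow> bool" where
  "robber_step E k c r r' \<longleftrightarrow>
     (\<lambda>x y. E x y \<and> x \<notin> c ` {..<k} \<and> y \<notin> c ` {..<k})\<^sup>*\<^sup>* r r'"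

text \<open>Capture in round n: after the cops' move C (n+1), some cop is on the robber's vertex r n.\<close>
definition cops_win :: "'a set \<Rightarrow> ('a \<Rightarrow> 'a \<Rightarrow> bool) \<Rightarrow> nat \<Rightarrow> bool" where
  "cops_win V E k \<longleftrightarrow>
    (\<exists>c0 \<sigma>. (\<forall>i<k. c0 i \<in> V)
       \<and> (\<forall>h. h \<noteq> [] \<longrightarrow> cop_step E k (fst (last h)) (\<sigma> h))
       \<and> (\<forall>C r. C 0 = c0
              \<and> (\<forall>n. C (Suc n) = \<sigma> (map (\<lambda>j. (C j, r j)) [0..<Suc n]))
              \<and> r 0 \<in> V
              \<and> (\<forall>n. robber_step E k (C (Suc n)) (r n) (r (Suc n)))
            \<longrightarrow> (\<exists>n. \<exists>i<k. C (Suc n) i = r n)))"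

definition c_infinity :: "'a set \<Rightarrow> ('a \<Rightarrow> 'a \<Rightarrow> bool) \<Rightarrow> nat" where
  "c_infinity V E = (LEAST k. cops_win V E k)"

end

theory Submission
  imports Defs
begin

text \<open>A single cop cannot catch the robber on a 2-connected block B that no vertex of the
  graph dominates: the robber always stands on a vertex of B different from, and not adjacent
  to, the cop's current vertex p. After the cop's move she is still uncaught, and since
  B - {p'} is connected for the cop's new vertex p', she can run inside B to her next hiding
  place. A non-dominated block is 2-connected, since an edge is dominated by each endpoint; and
  a vertex outside B dominating B would make B \<union> {p} 2-connected, contradicting maximality.\<close>

primrec cop_history ::
  "(nat \<Rightarrow> 'a) \<Rightarrow> (((nat \<Rightarrow> 'a) \<times> 'a) list \<Rightarrow> nat \<Rightarrow> 'a) \<Rightarrow> ((nat \<Rightarrow> 'a) \<Rightarrow> 'a) \<Rightarrow> nat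
     \<Rightarrow> (nat \<Rightarrow> 'a) list" where
  "cop_history c0 \<sigma> f 0 = [c0]"
| "cop_history c0 \<sigma> f (Suc n) =
     cop_history c0 \<sigma> f n @ [\<sigma> (map (\<lambda>c. (c, f c)) (cop_history c0 \<sigma> f n))]"

lemma length_cop_history [simp]: "length (cop_history c0 \<sigma> f n) = Suc n"
  by (induction n) auto

lemma map_nth_cop_history:
  "map (\<lambda>j. cop_history c0 \<sigma> f j ! j) [0..<Suc n] = cop_history c0 \<sigma> f n"
proof (induction n)
  case (Suc n)
  have "map (\<lambda>j. cop_history c0 \<sigma> f j ! j) [0..<Suc (Suc n)]
      = cop_history c0 \<sigma> f n @ [cop_history c0 \<sigma> f (Suc n) ! Suc n]"
    using Suc.IH by simp
  also have "\<dots> = cop_history c0 \<sigma> f (Suc n)"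
    by (simp add: nth_append)
  finally show ?case .
qed simp

lemma play_against_positional_robber:
  fixes c0 :: "nat \<Rightarrow> 'a" and f :: "(nat \<Rightarrow> 'a) \<Rightarrow> 'a"
  shows "\<exists>C. C 0 = c0 \<and> (\<forall>n. C (Suc n) = \<sigma> (map (\<lambda>j. (C j, f (C j))) [0..<Suc n]))"
proof (intro exI conjI allI)
  let ?C = "\<lambda>j. cop_history c0 \<sigma> f j ! j"
  fix n
  have "map (\<lambda>j. (?C j, f (?C j))) [0..<Suc n] = map (\<lambda>c. (c, f c)) (cop_history c0 \<sigma> f n)"
    by (subst map_nth_cop_history[symmetric]) (simp del: upt_Suc)
  then show "?C (Suc n) = \<sigma> (map (\<lambda>j. (?C j, f (?C j))) [0..<Suc n])"
    by (simp add: nth_append)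
qed simp

lemma one_cop_loses:
  assumes "B \<subseteq> V"
    and conn: "\<And>p. connected_on E (B - {p})"
    and hide: "\<And>p. \<exists>y\<in>B. y \<noteq> p \<and> \<not> E p y"
  shows "\<not> cops_win V E 1"
proof
  assume "cops_win V E 1"
  then obtain c0 \<sigma> where
    legal: "\<And>h. h \<noteq> [] \<Longrightarrow> cop_step E 1 (fst (last h)) (\<sigma> h)"
    and win: "\<And>C r. C 0 = c0 \<and> (\<forall>n. C (Suc n) = \<sigma> (map (\<lambda>j. (C j, r j)) [0..<Suc n]))
        \<and> r 0 \<in> V \<and> (\<forall>n. robber_step E 1 (C (Suc n)) (r n) (r (Suc n)))
        \<Longrightarrow> \<exists>n. \<exists>i<1. C (Suc n) i = r n"
    unfolding cops_win_def by blast
  define g where "g p = (SOME y. y \<in> B \<and> y \<noteq> p \<and> \<not> E p y)" for p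
  have g: "g p \<in> B" "g p \<noteq> p" "\<not> E p (g p)" for p
    using someI_ex[OF hide[of p, unfolded Bex_def]] unfolding g_def by auto
  define r where "r C = g (C (0::nat))" for C :: "nat \<Rightarrow> 'a"
  obtain C where C0: "C 0 = c0"
    and CS: "\<And>n. C (Suc n) = \<sigma> (map (\<lambda>j. (C j, r (C j))) [0..<Suc n])"
    using play_against_positional_robber by blast
  have cop_moves: "C (Suc n) 0 = C n 0 \<or> E (C n 0) (C (Suc n) 0)" for n
  proof -
    have "fst (last (map (\<lambda>j. (C j, r (C j))) [0..<Suc n])) = C n"
      by simp
    then show ?thesis
      using legal[of "map (\<lambda>j. (C j, r (C j))) [0..<Suc n]"] CS[of n]
      by (simp add: cop_step_def del: upt_Suc)
  qed
  have uncaught: "C (Suc n) 0 \<noteq> r (C n)" for n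
    using cop_moves[of n] g[of "C n 0"] unfolding r_def by auto
  have "robber_step E 1 (C (Suc n)) (r (C n)) (r (C (Suc n)))" for n
  proof -
    let ?p = "C (Suc n) 0"
    have "r (C n) \<in> B - {?p}" "r (C (Suc n)) \<in> B - {?p}"
      using uncaught[of n] g unfolding r_def by auto
    then have "(\<lambda>a b. E a b \<and> a \<in> B - {?p} \<and> b \<in> B - {?p})\<^sup>*\<^sup>* (r (C n)) (r (C (Suc n)))"
      using conn[of ?p] unfolding connected_on_def by blast
    then show ?thesis
      unfolding robber_step_def by (rule rtranclp_mono[THEN predicate2D, rotated]) auto
  qed
  moreover have "r (C 0) \<in> V"
    using g \<open>B \<subseteq> V\<close> unfolding r_def by auto
  ultimately obtain n where "C (Suc n) 0 = r (C n)"
    using win[of C "\<lambda>j. r (C j)"] C0 CS by blast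
  with uncaught show False by blast
qed

text \<open>With one cop on every vertex the robber is caught at once, so the minimum defining
  c_infinity is attained.\<close>

lemma cops_win_c_infinity:
  assumes "finite V"
  shows "cops_win V E (c_infinity V E)"
proof -
  obtain xs where xs: "set xs = V"
    using assms finite_list by blast
  have "cops_win V E (length xs)"
    unfolding cops_win_def
  proof (intro exI[of _ "(!) xs"] exI[of _ "\<lambda>h. fst (last h)"] conjI allI impI)
    show "i < length xs \<Longrightarrow> xs ! i \<in> V" for i
      using xs by auto
    show "cop_step E (length xs) (fst (last h)) (fst (last h))" for h
      by (simp add: cop_step_def)
    fix C r
    assume play: "C 0 = (!) xs \<and> (\<forall>n. C (Suc n) = fst (last (map (\<lambda>j. (C j, r j)) [0..<Suc n])))
      \<and> r 0 \<in> V \<and> (\<forall>n. robber_step E (length xs) (C (Suc n)) (r n) (r (Suc n)))"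
    then obtain i where "i < length xs" "xs ! i = r 0"
      using xs by (metis in_set_conv_nth)
    moreover have "C (Suc 0) = C 0"
      using play by simp
    ultimately have "i < length xs \<and> C (Suc 0) i = r 0"
      using play by simp
    then show "\<exists>n. \<exists>i<length xs. C (Suc n) i = r n"
      by blast
  qed
  then show ?thesis
    unfolding c_infinity_def by (rule LeastI)
qed

lemma connected_on_insert:
  assumes sym: "\<And>x y. E x y \<Longrightarrow> E y x"
    and "connected_on E S" "s \<in> S" "E x s"
  shows "connected_on E (insert x S)"
proof -
  let ?R = "\<lambda>a b. E a b \<and> a \<in> insert x S \<and> b \<in> insert x S"
  have inside: "?R\<^sup>*\<^sup>* a b" if "a \<in> S" "b \<in> S" for a b
    using assms(2) that unfolding connected_on_def
    by (blast intro: rtranclp_mono[THEN predicate2D, rotated])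
  have to_s: "?R\<^sup>*\<^sup>* a s" and from_s: "?R\<^sup>*\<^sup>* s a" if "a \<in> insert x S" for a
    using that inside[of a s] inside[of s a] assms(3,4) sym by auto
  have "?R\<^sup>*\<^sup>* a b" if "a \<in> insert x S" "b \<in> insert x S" for a b
    using to_s[OF that(1)] from_s[OF that(2)] by (rule rtranclp_trans)
  then show ?thesis
    unfolding connected_on_def by blast
qed

lemma two_connected_on_insert:
  assumes sym: "\<And>x y. E x y \<Longrightarrow> E y x"
    and B: "two_connected_on E B" and "p \<notin> B"
    and dom: "\<And>y. y \<in> B \<Longrightarrow> E p y"
  shows "two_connected_on E (insert p B)"
proof -
  have fin: "finite B" and card: "card B \<ge> 3" and conn: "connected_on E B"
    and conn_del: "\<And>v. v \<in> B \<Longrightarrow> connected_on E (B - {v})"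
    using B unfolding two_connected_on_def by auto
  have conn_insert_del: "connected_on E (insert p (B - {v}))" if "v \<in> B" for v
  proof -
    have "card (B - {v}) \<ge> 2"
      using card fin that by simp
    then have "B - {v} \<noteq> {}"
      by (metis card.empty not_numeral_le_zero)
    then obtain s where "s \<in> B - {v}" by blast
    then show ?thesis
      using connected_on_insert[OF sym conn_del[OF that]] dom by auto
  qed
  show ?thesis
    unfolding two_connected_on_def
  proof (intro conjI ballI)
    show "connected_on E (insert p B)"
      using conn connected_on_insert[OF sym conn _ dom] unfolding connected_on_def by blast
    fix v assume "v \<in> insert p B"
    then show "connected_on E (insert p B - {v})"
      using conn conn_insert_del \<open>p \<notin> B\<close> by (cases "v = p") (auto simp: insert_Diff_if)
  qed (use fin card \<open>p \<notin> B\<close> in auto)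
qed

lemma two_connected_on_Diff:
  assumes "two_connected_on E B"
  shows "connected_on E (B - {p})"
  using assms unfolding two_connected_on_def by (cases "p \<in> B") auto

lemma block_not_dominated:
  assumes "simple_graph V E" "is_block V E B" "\<not> block_dom_one E B"
  shows "two_connected_on E B" and "\<exists>y\<in>B. y \<noteq> p \<and> \<not> E p y"
proof -
  have sym: "\<And>x y. E x y \<Longrightarrow> E y x" and inV: "\<And>x y. E x y \<Longrightarrow> y \<in> V"
    using assms(1) unfolding simple_graph_def by auto
  have "B \<subseteq> V"
    using assms(2) unfolding is_block_def by blast
  have B: "two_connected_on E B"
    and maximal: "\<And>S. B \<subset> S \<Longrightarrow> S \<subseteq> V \<Longrightarrow> \<not> two_connected_on E S"
    using assms(2,3) unfolding is_block_def block_dom_one_def by blast+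
  show "two_connected_on E B"
    by (fact B)
  show "\<exists>y\<in>B. y \<noteq> p \<and> \<not> E p y"
  proof (cases "p \<in> B")
    case True
    then show ?thesis
      using assms(3) unfolding block_dom_one_def by blast
  next
    case False
    show ?thesis
    proof (rule ccontr)
      assume "\<not> ?thesis"
      then have dom: "\<And>y. y \<in> B \<Longrightarrow> E p y"
        using False by auto
      have "B \<noteq> {}"
        using B unfolding two_connected_on_def connected_on_def by blast
      then have "insert p B \<subseteq> V"
        using dom sym inV \<open>B \<subseteq> V\<close> by blast
      then show False
        using maximal[of "insert p B"] two_connected_on_insert[OF sym B False dom] False
        by blast
    qed
  qed
qed

theorem mainTheorem9:
  fixes V :: "'a set" and E :: "'a \<Rightarrow> 'a \<Rightarrow> bool"
  assumes "simple_graph V E"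
    and "connected_on E V"
    and "c_infinity V E = 1"
    and "is_block V E B"
  shows "block_dom_one E B"
proof (rule ccontr)
  assume not_dom: "\<not> block_dom_one E B"
  have "cops_win V E 1"
    using cops_win_c_infinity[of V E] assms(1,3) unfolding simple_graph_def by simp
  moreover have "B \<subseteq> V"
    using assms(4) unfolding is_block_def by blast
  moreover have "connected_on E (B - {p})" for p
    using two_connected_on_Diff block_not_dominated(1)[OF assms(1,4) not_dom] .
  ultimately show False
    using one_cop_loses block_not_dominated(2)[OF assms(1,4) not_dom] by blast
qed

end
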